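(* Let $\beta\ge 1$ and let $R=(S^0,\dots,S^T)$ be a $\beta$-bounded $T$-covering in a congestion game in which every delay function is $f(x)=x$, and assume $\mathrm{OPT}>0$. Then $$\frac{\rho(R)}{\mathrm{OPT}}\le 2\,\frac{H(R)}{\mathrm{OPT}}+4\beta+1.$$
   Context: A congestion game has players $N=\{1,\dots,n\}$, a finite resource set $E$ and strategy sets $\Sigma_i\subseteq 2^E$. For a profile $S=(s_1,\dots,s_n)$, $n_e(S)=|\{i: e\in s_i\}|$. Here all delays are $f(x)=x$, so the cost of player $i$ is $c_i(S)=\sum_{e\in s_i}n_e(S)$ and the social cost is $C(S)=\sum_i c_i(S)=\sum_{e\in E}n_e(S)^2$. Fix an optimal profile $S^*=(s_1^*,\dots,s_n^* )$ minimizing $C$ and write $\mathrm{OPT}=C(S^* )$. A best response of player $i$ in $S$ is a strategy $s_i^b\in\Sigma_i$ minimizing $c_i(S_{-i},\cdot)$ over $\Sigma_i$ (where $(S_{-i},s_i')$ replaces $s_i$ by $s_i'$); if no strategy strictly decreases $i$'s cost, the best response is $s_i$ itself. A $T$-covering is a sequence of profiles $R=(S^0,\dots,S^T)$ together with players $\pi(1),\dots,\pi(T)$ such that for each $1\le t\le T$, $S^t=(S^{t-1}_{-\pi(t)},s')$ where $s'$ is a best response of $\pi(t)$ in $S^{t-1}$, and every player of $N$ occurs at least once among $\pi(1),\dots,\pi(T)$. It is $\beta$-bounded if every player occurs at most $\beta$ times among $\pi(1),\dots,\pi(T)$. For each player $i$, $\mathrm{last}(i)=\max\{t:\pi(t)=i\}$.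 Define $\rho(R)=\sum_{i=1}^n\sum_{e\in s_i^*}\bigl(n_e(S^{\mathrm{last}(i)-1})+1\bigr)$ and $H(R)=\sum_{i=1}^n\sum_{e\in s_i^*}n_e(S^0)=\sum_{e\in E}n_e(S^0)\,n_e(S^* )$. *)

theory Defs
  imports Complex_Main
begin

text \<open>Congestion games with linear delays f(x) = x. Players are the naturals 1..n,
  resources are of an arbitrary type 'e, a profile is a function from players to
  strategies (sets of resources).\<close>

definition players :: "nat \<Rightarrow> nat set" where
  "players n = {1..n}"

definition load :: "nat \<Rightarrow> (nat \<Rightarrow> 'e set) \<Rightarrow> 'e \<Rightarrow> nat" where
  "load n S e = card {i \<in> players n. e \<in> S i}"

definition cost :: "nat \<Rightarrow> (nat \<Rightarrow> 'e set) \<Rightarrow> nat \<Rightarrow> nat" where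
  "cost n S i = (\<Sum>e\<in>S i. load n S e)"

definition social_cost :: "nat \<Rightarrow> (nat \<Rightarrow> 'e set) \<Rightarrow> nat" where
  "social_cost n S = (\<Sum>i\<in>players n. cost n S i)"

definition congestion_game :: "'e set \<Rightarrow> nat \<Rightarrow> (nat \<Rightarrow> 'e set set) \<Rightarrow> bool" where
  "congestion_game E n \<Sigma> \<longleftrightarrow> finite E \<and> (\<forall>i\<in>players n. \<Sigma> i \<noteq> {} \<and> \<Sigma> i \<subseteq> Pow E)"

definition valid_profile :: "nat \<Rightarrow> (nat \<Rightarrow> 'e set set) \<Rightarrow> (nat \<Rightarrow> 'e set) \<Rightarrow> bool" where
  "valid_profile n \<Sigma> S \<longleftrightarrow> (\<forall>i\<in>players n. S i \<in> \<Sigma> i)"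

definition optimal_profile :: "nat \<Rightarrow> (nat \<Rightarrow> 'e set set) \<Rightarrow> (nat \<Rightarrow> 'e set) \<Rightarrow> bool" where
  "optimal_profile n \<Sigma> S \<longleftrightarrow> valid_profile n \<Sigma> S \<and>
     (\<forall>S'. valid_profile n \<Sigma> S' \<longrightarrow> social_cost n S \<le> social_cost n S')"

definition best_response :: "nat \<Rightarrow> (nat \<Rightarrow> 'e set set) \<Rightarrow> (nat \<Rightarrow> 'e set) \<Rightarrow> nat \<Rightarrow> 'e set \<Rightarrow> bool" where
  "best_response n \<Sigma> S i s' \<longleftrightarrow> s' \<in> \<Sigma> i \<and>
     (\<forall>s''\<in>\<Sigma> i. cost n (S(i := s')) i \<le> cost n (S(i := s'')) i) \<and>
     ((\<forall>s''\<in>\<Sigma> i. cost n S i \<le> cost n (S(i := s'')) i) \<longrightarrow> s' = S i)"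

text \<open>R = (Sq 0, ..., Sq T) with players \<pi> 1, ..., \<pi> T is a T-covering.\<close>
definition covering :: "nat \<Rightarrow> (nat \<Rightarrow> 'e set set) \<Rightarrow> nat \<Rightarrow> (nat \<Rightarrow> nat \<Rightarrow> 'e set) \<Rightarrow> (nat \<Rightarrow> nat) \<Rightarrow> bool" where
  "covering n \<Sigma> T Sq \<pi> \<longleftrightarrow> valid_profile n \<Sigma> (Sq 0) \<and>
     (\<forall>t\<in>{1..T}. \<pi> t \<in> players n \<and>
        (\<exists>s'. best_response n \<Sigma> (Sq (t - 1)) (\<pi> t) s' \<and> Sq t = (Sq (t - 1))(\<pi> t := s'))) \<and>
     (\<forall>i\<in>players n. \<exists>t\<in>{1..T}. \<pi> t = i)"

definition bounded_covering :: "nat \<Rightarrow> nat \<Rightarrow> (nat \<Rightarrow> nat) \<Rightarrow> bool" where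
  "bounded_covering \<beta> T \<pi> \<longleftrightarrow> (\<forall>i. card {t\<in>{1..T}. \<pi> t = i} \<le> \<beta>)"

definition last_move :: "nat \<Rightarrow> (nat \<Rightarrow> nat) \<Rightarrow> nat \<Rightarrow> nat" where
  "last_move T \<pi> i = Max {t\<in>{1..T}. \<pi> t = i}"

definition rho :: "nat \<Rightarrow> nat \<Rightarrow> (nat \<Rightarrow> nat \<Rightarrow> 'e set) \<Rightarrow> (nat \<Rightarrow> nat) \<Rightarrow> (nat \<Rightarrow> 'e set) \<Rightarrow> nat" where
  "rho n T Sq \<pi> Sstar =
     (\<Sum>i\<in>players n. \<Sum>e\<in>Sstar i. load n (Sq (last_move T \<pi> i - 1)) e + 1)"

definition H :: "nat \<Rightarrow> (nat \<Rightarrow> nat \<Rightarrow> 'e set) \<Rightarrow> (nat \<Rightarrow> 'e set) \<Rightarrow> nat" where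
  "H n Sq Sstar = (\<Sum>i\<in>players n. \<Sum>e\<in>Sstar i. load n (Sq 0) e)"

end

theory Submission imports Defs "HOL-Analysis.Convex" begin

(* For a resource e let peak(e) be the largest load e carries in S^0, ..., S^T, reached at
   a time t_e.  The players using e at time t_e either already used it in S^0, or they moved
   in 1..t_e; call the latter the movers of e, and let m(e) be their number.  Then
   peak(e) <= n_e(S^0) + m(e).  Ordering the movers by their last move before t_e, the k-th
   of them saw a load of at least k on e when it made that move; these moves are distinct
   moves of R, so sum_e m(e)^2 <= 2 * (total cost of the moves of R).  Each move is a best
   response, so it costs at most what the optimal strategy would cost, and with at most
   beta moves per player this is at most 2 beta (Q + N), where
   Q + N = sum_i sum_{e in s_i^*} (peak(e) + 1) also bounds rho(R).
   Writing everything as sums over resources, Cauchy-Schwarz turns these facts into a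
   quadratic inequality for Q, whose solution is Q <= 2 H + 4 beta OPT. *)

lemma finite_players [simp]: "finite (players n)"
  by (simp add: players_def)

lemma strategy_subset:
  assumes "congestion_game E n \<Sigma>" "valid_profile n \<Sigma> S" "i \<in> players n"
  shows "S i \<subseteq> E"
  using assms unfolding congestion_game_def valid_profile_def by blast

lemma finite_strategy:
  assumes "congestion_game E n \<Sigma>" "valid_profile n \<Sigma> S" "i \<in> players n"
  shows "finite (S i)"
  using strategy_subset[OF assms] assms(1) finite_subset
  unfolding congestion_game_def by blast

lemma covering_step:
  assumes "covering n \<Sigma> T Sq \<pi>" "t \<in> {1..T}"
  obtains s' where "\<pi> t \<in> players n" "best_response n \<Sigma> (Sq (t - 1)) (\<pi> t) s'"
    "Sq t = (Sq (t - 1))(\<pi> t := s')"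
  using assms unfolding covering_def by blast

lemma covering_moves_everyone:
  assumes "covering n \<Sigma> T Sq \<pi>" "i \<in> players n"
  shows "\<exists>t\<in>{1..T}. \<pi> t = i"
  using assms unfolding covering_def by blast

lemma covering_valid:
  assumes "covering n \<Sigma> T Sq \<pi>" "t \<le> T"
  shows "valid_profile n \<Sigma> (Sq t)"
  using assms(2)
proof (induction t)
  case 0
  then show ?case using assms(1) by (simp add: covering_def)
next
  case (Suc t)
  obtain s' where "best_response n \<Sigma> (Sq t) (\<pi> (Suc t)) s'"
    and step: "Sq (Suc t) = (Sq t)(\<pi> (Suc t) := s')"
    using covering_step[OF assms(1), of "Suc t"] Suc.prems by auto
  then have "s' \<in> \<Sigma> (\<pi> (Suc t))" by (simp add: best_response_def)
  with Suc step show ?case unfolding valid_profile_def by auto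
qed

lemma strategy_unchanged:
  assumes "covering n \<Sigma> T Sq \<pi>" "t1 \<le> t2" "t2 \<le> T"
    and "\<And>\<tau>. t1 < \<tau> \<Longrightarrow> \<tau> \<le> t2 \<Longrightarrow> \<pi> \<tau> \<noteq> j"
  shows "Sq t2 j = Sq t1 j"
  using assms(2-4)
proof (induction t2)
  case 0
  then show ?case by simp
next
  case (Suc t)
  show ?case
  proof (cases "t1 = Suc t")
    case False
    then have "Sq t j = Sq t1 j" using Suc by auto
    moreover obtain s' where "Sq (Suc t) = (Sq t)(\<pi> (Suc t) := s')"
      using covering_step[OF assms(1), of "Suc t"] Suc.prems by auto
    moreover have "\<pi> (Suc t) \<noteq> j" using Suc.prems False by auto
    ultimately show ?thesis by simp
  qed simp
qed

lemma last_move_props: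
  assumes "\<exists>\<tau>\<in>{1..t}. \<pi> \<tau> = j"
  shows "last_move t \<pi> j \<in> {1..t}" "\<pi> (last_move t \<pi> j) = j"
    and "\<And>\<tau>. last_move t \<pi> j < \<tau> \<Longrightarrow> \<tau> \<le> t \<Longrightarrow> \<pi> \<tau> \<noteq> j"
proof -
  have "last_move t \<pi> j \<in> {\<tau>\<in>{1..t}. \<pi> \<tau> = j}"
    unfolding last_move_def using assms by (intro Max_in) auto
  then show "last_move t \<pi> j \<in> {1..t}" "\<pi> (last_move t \<pi> j) = j" by auto
  fix \<tau> assume "last_move t \<pi> j < \<tau>" "\<tau> \<le> t"
  moreover have "\<pi> \<tau> = j \<Longrightarrow> \<tau> \<le> last_move t \<pi> j"
    unfolding last_move_def using \<open>\<tau> \<le> t\<close> \<open>last_move t \<pi> j < \<tau>\<close> by (intro Max_ge) auto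
  ultimately show "\<pi> \<tau> \<noteq> j" by auto
qed

lemma load_update_le: "load n (S(i := s)) e \<le> load n S e + 1"
proof -
  have "{j \<in> players n. e \<in> (S(i := s)) j} \<subseteq> insert i {j \<in> players n. e \<in> S j}" by auto
  then have "load n (S(i := s)) e \<le> card (insert i {j \<in> players n. e \<in> S j})"
    unfolding load_def by (intro card_mono) auto
  also have "\<dots> \<le> load n S e + 1" unfolding load_def by (simp add: card_insert_le_m1)
  finally show ?thesis .
qed

lemma move_cost_le:
  assumes "covering n \<Sigma> T Sq \<pi>" "t \<in> {1..T}" "s \<in> \<Sigma> (\<pi> t)"
  shows "cost n (Sq t) (\<pi> t) \<le> (\<Sum>e\<in>s. load n (Sq (t - 1)) e + 1)"
proof -
  obtain s' where br: "best_response n \<Sigma> (Sq (t - 1)) (\<pi> t) s'"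
    and step: "Sq t = (Sq (t - 1))(\<pi> t := s')"
    using covering_step[OF assms(1,2)] by blast
  have "cost n (Sq t) (\<pi> t) \<le> cost n ((Sq (t - 1))(\<pi> t := s)) (\<pi> t)"
    using br assms(3) step unfolding best_response_def by auto
  also have "\<dots> = (\<Sum>e\<in>s. load n ((Sq (t - 1))(\<pi> t := s)) e)" by (simp add: cost_def)
  also have "\<dots> \<le> (\<Sum>e\<in>s. load n (Sq (t - 1)) e + 1)" by (intro sum_mono load_update_le)
  finally show ?thesis .
qed

section \<open>Peak loads\<close>

definition peak_load :: "nat \<Rightarrow> nat \<Rightarrow> (nat \<Rightarrow> nat \<Rightarrow> 'e set) \<Rightarrow> 'e \<Rightarrow> nat" where
  "peak_load n T Sq e = Max ((\<lambda>t. load n (Sq t) e) ` {0..T})"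

lemma load_le_peak: "t \<le> T \<Longrightarrow> load n (Sq t) e \<le> peak_load n T Sq e"
  unfolding peak_load_def by (intro Max_ge) auto

lemma peak_attained: obtains t where "t \<le> T" "load n (Sq t) e = peak_load n T Sq e"
proof -
  have "peak_load n T Sq e \<in> (\<lambda>t. load n (Sq t) e) ` {0..T}"
    unfolding peak_load_def by (intro Max_in) auto
  then show ?thesis using that by auto
qed

text \<open>The quantity that bounds both rho(R) and the total cost of the moves.\<close>
definition peak_cost :: "nat \<Rightarrow> nat \<Rightarrow> (nat \<Rightarrow> nat \<Rightarrow> 'e set) \<Rightarrow> (nat \<Rightarrow> 'e set) \<Rightarrow> nat" where
  "peak_cost n T Sq Sstar = (\<Sum>i\<in>players n. \<Sum>e\<in>Sstar i. peak_load n T Sq e + 1)"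

lemma rho_le_peak_cost:
  assumes "covering n \<Sigma> T Sq \<pi>"
  shows "rho n T Sq \<pi> Sstar \<le> peak_cost n T Sq Sstar"
  unfolding rho_def peak_cost_def
proof (intro sum_mono add_right_mono load_le_peak)
  fix i assume "i \<in> players n"
  then have "last_move T \<pi> i \<in> {1..T}"
    by (intro last_move_props(1) covering_moves_everyone[OF assms])
  then show "last_move T \<pi> i - 1 \<le> T" by (meson atLeastAtMost_iff diff_le_self le_trans)
qed

text \<open>Since every player moves at most beta times and each move is a best response,
  the moves of R cost at most beta times the peak cost of the optimal strategies.\<close>
lemma moves_cost_le:
  assumes "covering n \<Sigma> T Sq \<pi>" "bounded_covering \<beta> T \<pi>" "valid_profile n \<Sigma> Sstar"
  shows "(\<Sum>t\<in>{1..T}. cost n (Sq t) (\<pi> t)) \<le> \<beta> * peak_cost n T Sq Sstar"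
proof -
  define G where "G i = (\<Sum>e\<in>Sstar i. peak_load n T Sq e + 1)" for i
  have "(\<Sum>t\<in>{1..T}. cost n (Sq t) (\<pi> t)) \<le> (\<Sum>t\<in>{1..T}. G (\<pi> t))"
  proof (rule sum_mono)
    fix t assume t: "t \<in> {1..T}"
    then have "\<pi> t \<in> players n" using covering_step[OF assms(1)] by blast
    then have "Sstar (\<pi> t) \<in> \<Sigma> (\<pi> t)" using assms(3) unfolding valid_profile_def by blast
    from move_cost_le[OF assms(1) t this]
    have "cost n (Sq t) (\<pi> t) \<le> (\<Sum>e\<in>Sstar (\<pi> t). load n (Sq (t - 1)) e + 1)" .
    also have "\<dots> \<le> G (\<pi> t)" unfolding G_def using t by (intro sum_mono add_right_mono load_le_peak) auto
    finally show "cost n (Sq t) (\<pi> t) \<le> G (\<pi> t)" .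
  qed
  also have "\<dots> = (\<Sum>i\<in>players n. \<Sum>t\<in>{t\<in>{1..T}. \<pi> t = i}. G (\<pi> t))"
    using assms(1) unfolding covering_def by (intro sum.group[symmetric]) auto
  also have "\<dots> = (\<Sum>i\<in>players n. card {t\<in>{1..T}. \<pi> t = i} * G i)" by simp
  also have "\<dots> \<le> (\<Sum>i\<in>players n. \<beta> * G i)"
    using assms(2) unfolding bounded_covering_def by (intro sum_mono mult_right_mono) auto
  finally show ?thesis by (simp add: sum_distrib_left G_def peak_cost_def)
qed

section \<open>Movers of a resource\<close>

definition movers :: "nat \<Rightarrow> (nat \<Rightarrow> nat \<Rightarrow> 'e set) \<Rightarrow> (nat \<Rightarrow> nat) \<Rightarrow> nat \<Rightarrow> 'e \<Rightarrow> nat set" where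
  "movers n Sq \<pi> t e = {j \<in> players n. e \<in> Sq t j \<and> (\<exists>\<tau>\<in>{1..t}. \<pi> \<tau> = j)}"

lemma finite_movers [simp]: "finite (movers n Sq \<pi> t e)"
  unfolding movers_def by simp

text \<open>Whoever uses e at time t and is not a mover already used e at time 0.\<close>
lemma load_le_initial_plus_movers:
  assumes "covering n \<Sigma> T Sq \<pi>" "t \<le> T"
  shows "load n (Sq t) e \<le> load n (Sq 0) e + card (movers n Sq \<pi> t e)"
proof -
  have "{j \<in> players n. e \<in> Sq t j} \<subseteq> {j \<in> players n. e \<in> Sq 0 j} \<union> movers n Sq \<pi> t e"
  proof
    fix j assume j: "j \<in> {j \<in> players n. e \<in> Sq t j}"
    show "j \<in> {j \<in> players n. e \<in> Sq 0 j} \<union> movers n Sq \<pi> t e"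
    proof (cases "\<exists>\<tau>\<in>{1..t}. \<pi> \<tau> = j")
      case False
      then have "Sq t j = Sq 0 j" using assms by (intro strategy_unchanged) auto
      then show ?thesis using j by auto
    qed (use j in \<open>auto simp: movers_def\<close>)
  qed
  then have "load n (Sq t) e \<le> card ({j \<in> players n. e \<in> Sq 0 j} \<union> movers n Sq \<pi> t e)"
    unfolding load_def by (intro card_mono) auto
  also have "\<dots> \<le> load n (Sq 0) e + card (movers n Sq \<pi> t e)"
    unfolding load_def by (rule card_Un_le)
  finally show ?thesis .
qed

lemma unchanged_after_last_move:
  assumes "covering n \<Sigma> T Sq \<pi>" "t \<le> T" "\<exists>\<tau>\<in>{1..t}. \<pi> \<tau> = k"
    and "last_move t \<pi> k \<le> s" "s \<le> t"
  shows "Sq s k = Sq t k"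
  using assms last_move_props(3)[OF assms(3)]
  by (intro strategy_unchanged[symmetric]) auto

lemma earlier_movers_le_load:
  assumes "covering n \<Sigma> T Sq \<pi>" "t \<le> T" "j \<in> movers n Sq \<pi> t e"
  shows "card {k \<in> movers n Sq \<pi> t e. last_move t \<pi> k \<le> last_move t \<pi> j}
           \<le> load n (Sq (last_move t \<pi> j)) e"
proof -
  have "last_move t \<pi> j \<le> t"
    using assms(3) last_move_props(1)[of t \<pi> j] unfolding movers_def by auto
  then have "{k \<in> movers n Sq \<pi> t e. last_move t \<pi> k \<le> last_move t \<pi> j}
          \<subseteq> {k \<in> players n. e \<in> Sq (last_move t \<pi> j) k}"
    using unchanged_after_last_move[OF assms(1,2)] unfolding movers_def by auto
  then show ?thesis unfolding load_def by (intro card_mono) auto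
qed

lemma card_square_le_ordered_pairs:
  fixes g :: "'a \<Rightarrow> 'b::linorder"
  assumes "finite A"
  shows "(card A)^2 \<le> 2 * (\<Sum>j\<in>A. card {k\<in>A. g k \<le> g j})"
proof -
  let ?below = "{p\<in>A\<times>A. g (snd p) \<le> g (fst p)}"
  let ?above = "{p\<in>A\<times>A. g (fst p) \<le> g (snd p)}"
  have "?below = (SIGMA j:A. {k\<in>A. g k \<le> g j})" by auto
  then have below: "card ?below = (\<Sum>j\<in>A. card {k\<in>A. g k \<le> g j})"
    using assms by simp
  have "bij_betw prod.swap ?above ?below"
    by (rule bij_betwI[where g = prod.swap]) auto
  then have above: "card ?above = card ?below" by (rule bij_betw_same_card)
  have split: "A \<times> A = ?below \<union> ?above"
  proof (rule set_eqI)
    fix p :: "'a \<times> 'a"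
    obtain j k where p: "p = (j, k)" by fastforce
    show "p \<in> A \<times> A \<longleftrightarrow> p \<in> ?below \<union> ?above"
      unfolding p using linorder_linear[of "g j" "g k"] by auto
  qed
  have "card (A \<times> A) \<le> card ?below + card ?above" by (subst split) (rule card_Un_le)
  then show ?thesis using below above by (simp add: card_cartesian_product power2_eq_square)
qed

lemma movers_square_le:
  assumes "covering n \<Sigma> T Sq \<pi>" "t \<le> T"
  shows "(card (movers n Sq \<pi> t e))^2
           \<le> 2 * (\<Sum>j\<in>movers n Sq \<pi> t e. load n (Sq (last_move t \<pi> j)) e)"
proof -
  let ?M = "movers n Sq \<pi> t e"
  have "(card ?M)^2 \<le> 2 * (\<Sum>j\<in>?M. card {k\<in>?M. last_move t \<pi> k \<le> last_move t \<pi> j})"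
    by (rule card_square_le_ordered_pairs) simp
  also have "\<dots> \<le> 2 * (\<Sum>j\<in>?M. load n (Sq (last_move t \<pi> j)) e)"
    using earlier_movers_le_load[OF assms] by (intro mult_left_mono sum_mono) auto
  finally show ?thesis .
qed

text \<open>Charging: for any choice of times t_e, the pair (e, j) with j a mover of e at t_e
  is charged to the last move of j before t_e on resource e.  Distinct pairs are charged
  to distinct (move, resource) pairs, so the total is at most the cost of all moves.\<close>
lemma movers_charge_le_moves_cost:
  assumes game: "congestion_game E n \<Sigma>" and cov: "covering n \<Sigma> T Sq \<pi>"
    and te: "\<And>e. te e \<le> T"
  shows "(\<Sum>e\<in>E. \<Sum>j\<in>movers n Sq \<pi> (te e) e. load n (Sq (last_move (te e) \<pi> j)) e)
           \<le> (\<Sum>t\<in>{1..T}. cost n (Sq t) (\<pi> t))"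
proof -
  define M where "M e = movers n Sq \<pi> (te e) e" for e
  define charge where "charge p = (last_move (te (fst p)) \<pi> (snd p), fst p)" for p
  define moves where "moves = Sigma {1..T} (\<lambda>t. Sq t (\<pi> t))"
  define h where "h p = load n (Sq (fst p)) (snd p)" for p
  have finE: "finite E" using game by (simp add: congestion_game_def)
  have last: "last_move (te e) \<pi> j \<in> {1..te e}" "\<pi> (last_move (te e) \<pi> j) = j"
    if "j \<in> M e" for e j using that last_move_props[of "te e" \<pi> j] unfolding M_def movers_def by auto
  have inj: "inj_on charge (Sigma E M)"
  proof (rule inj_onI)
    fix x y assume "x \<in> Sigma E M" "y \<in> Sigma E M" "charge x = charge y"
    then show "x = y" using last(2) unfolding charge_def
      by (cases x, cases y) (metis SigmaE fst_conv prod.inject snd_conv)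
  qed
  have "charge (e, j) \<in> moves" if ej: "e \<in> E" "j \<in> M e" for e j
  proof -
    have "e \<in> Sq (last_move (te e) \<pi> j) j"
      using ej last(1) unchanged_after_last_move[OF cov te[of e], of j "last_move (te e) \<pi> j"]
      unfolding M_def movers_def by auto
    then show ?thesis using ej last[of j e] te[of e] unfolding charge_def moves_def by auto
  qed
  then have sub: "charge ` Sigma E M \<subseteq> moves" by auto
  have fin_moves: "finite (Sq t (\<pi> t))" if "t \<in> {1..T}" for t
    using finite_strategy[OF game covering_valid[OF cov]] covering_step[OF cov that] that by auto
  then have fin: "finite moves" unfolding moves_def by (intro finite_SigmaI) auto
  have "(\<Sum>e\<in>E. \<Sum>j\<in>M e. load n (Sq (last_move (te e) \<pi> j)) e) = sum (h \<circ> charge) (Sigma E M)"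
    unfolding M_def by (subst sum.Sigma) (auto simp: finE h_def charge_def split_def)
  also have "\<dots> \<le> sum h moves"
    using sum.reindex[OF inj, of h] sum_mono2[OF fin sub, of h] by simp
  also have "\<dots> = (\<Sum>t\<in>{1..T}. cost n (Sq t) (\<pi> t))"
    unfolding moves_def h_def cost_def by (subst sum.Sigma) (auto simp: fin_moves split_def)
  finally show ?thesis unfolding M_def .
qed

lemma movers_bound:
  assumes game: "congestion_game E n \<Sigma>" and cov: "covering n \<Sigma> T Sq \<pi>"
    and bounded: "bounded_covering \<beta> T \<pi>" and opt: "valid_profile n \<Sigma> Sstar"
  obtains m :: "'e \<Rightarrow> nat"
  where "\<And>e. peak_load n T Sq e \<le> load n (Sq 0) e + m e"
    and "(\<Sum>e\<in>E. (m e)^2) \<le> 2 * \<beta> * peak_cost n T Sq Sstar"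
proof -
  have "\<exists>t. t \<le> T \<and> load n (Sq t) e = peak_load n T Sq e" for e
    by (meson peak_attained)
  then obtain te where te: "\<And>e. te e \<le> T" "\<And>e. load n (Sq (te e)) e = peak_load n T Sq e"
    by metis
  define m where "m e = card (movers n Sq \<pi> (te e) e)" for e
  show thesis
  proof (rule that)
    show "peak_load n T Sq e \<le> load n (Sq 0) e + m e" for e
      using load_le_initial_plus_movers[OF cov te(1)] te(2) unfolding m_def by metis
    have "(\<Sum>e\<in>E. (m e)^2)
            \<le> (\<Sum>e\<in>E. 2 * (\<Sum>j\<in>movers n Sq \<pi> (te e) e. load n (Sq (last_move (te e) \<pi> j)) e))"
      unfolding m_def by (intro sum_mono movers_square_le[OF cov te(1)])
    also have "\<dots> \<le> 2 * (\<Sum>t\<in>{1..T}. cost n (Sq t) (\<pi> t))"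
      using movers_charge_le_moves_cost[OF game cov te(1)] by (simp add: sum_distrib_left[symmetric])
    also have "\<dots> \<le> 2 * (\<beta> * peak_cost n T Sq Sstar)"
      using moves_cost_le[OF cov bounded opt] by simp
    finally show "(\<Sum>e\<in>E. (m e)^2) \<le> 2 * \<beta> * peak_cost n T Sq Sstar" by simp
  qed
qed

section \<open>The estimate over resources\<close>

lemma sum_players_resources:
  assumes "finite E" "\<And>i. i \<in> players n \<Longrightarrow> S i \<subseteq> E"
  shows "(\<Sum>i\<in>players n. \<Sum>e\<in>S i. f e) = (\<Sum>e\<in>E. load n S e * f e)"
proof -
  have "(\<Sum>i\<in>players n. \<Sum>e\<in>S i. f e) = (\<Sum>i\<in>players n. \<Sum>e\<in>{e \<in> E. e \<in> S i}. f e)"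
    using assms(2) by (intro sum.cong refl) (metis Int_absorb1 Collect_mem_eq Collect_conj_eq)
  also have "\<dots> = (\<Sum>e\<in>E. \<Sum>i\<in>{i \<in> players n. e \<in> S i}. f e)"
    using assms(1) by (rule sum.swap_restrict[OF finite_players])
  also have "\<dots> = (\<Sum>e\<in>E. load n S e * f e)" by (simp add: load_def)
  finally show ?thesis .
qed

lemma quadratic_estimate:
  fixes Q N H X Opt S b :: real
  assumes "Q \<le> H + X" "X^2 \<le> Opt * S" "S \<le> 2 * b * (Q + N)"
    and "0 \<le> Q" "0 \<le> N" "N \<le> Opt" "1 \<le> b"
  shows "Q + N \<le> 2 * H + (4 * b + 1) * Opt"
proof -
  define K where "K = b * Opt"
  have "Opt \<le> K" "0 \<le> K" using assms(5-7) mult_right_mono[of 1 b Opt] unfolding K_def by auto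
  have "S \<le> 2 * b * (Q + Opt)" using assms(3,6,7) by (smt (verit) mult_left_mono)
  then have "X^2 \<le> Opt * (2 * b * (Q + Opt))" using assms(2,5,6) by (smt (verit) mult_left_mono)
  also have "\<dots> = 2 * K * Q + 2 * K * Opt" unfolding K_def by (simp add: algebra_simps)
  also have "\<dots> \<le> (Q / 2 + 2 * K)^2"
  proof -
    have "K * Opt \<le> K * K" using \<open>Opt \<le> K\<close> \<open>0 \<le> K\<close> by (rule mult_left_mono)
    moreover have "(Q / 2 + 2 * K)^2 = Q * Q / 4 + 2 * K * Q + 4 * (K * K)"
      by (simp add: power2_eq_square field_simps)
    moreover have "0 \<le> Q * Q" "0 \<le> K * K" by simp_all
    ultimately show ?thesis by linarith
  qed
  finally have "X^2 \<le> (Q / 2 + 2 * K)^2" .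
  then have "X \<le> Q / 2 + 2 * K" by (rule power2_le_imp_le) (use assms(4) \<open>0 \<le> K\<close> in simp)
  then have "Q \<le> 2 * H + 4 * K" using assms(1) by linarith
  moreover have "(4 * b + 1) * Opt = 4 * K + Opt" unfolding K_def by (simp add: algebra_simps)
  ultimately show ?thesis using assms(6) by linarith
qed

text \<open>The estimate in resource form, with ns the optimal loads, p the peak loads, h the
  initial loads: via Cauchy-Schwarz for X = sum ns m it is an instance of the quadratic
  inequality.\<close>
lemma resource_estimate:
  fixes p h m ns :: "'e \<Rightarrow> nat" and b :: real
  assumes "\<And>e. p e \<le> h e + m e"
    and "real (\<Sum>e\<in>E. (m e)^2) \<le> 2 * b * real (\<Sum>e\<in>E. ns e * (p e + 1))"
    and "1 \<le> b"
  shows "real (\<Sum>e\<in>E. ns e * (p e + 1))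
           \<le> 2 * real (\<Sum>e\<in>E. ns e * h e) + (4 * b + 1) * real (\<Sum>e\<in>E. (ns e)^2)"
proof -
  define Q where "Q = (\<Sum>e\<in>E. real (ns e) * real (p e))"
  define N where "N = (\<Sum>e\<in>E. real (ns e))"
  define X where "X = (\<Sum>e\<in>E. real (ns e) * real (m e))"
  have split: "real (\<Sum>e\<in>E. ns e * (p e + 1)) = Q + N"
    unfolding Q_def N_def by (simp add: sum.distrib algebra_simps)
  have "real (p e) \<le> real (h e) + real (m e)" for e
    using assms(1)[of e] by (metis of_nat_add of_nat_le_iff)
  then have "Q \<le> (\<Sum>e\<in>E. real (ns e) * (real (h e) + real (m e)))"
    unfolding Q_def by (intro sum_mono mult_left_mono) auto
  also have "\<dots> = real (\<Sum>e\<in>E. ns e * h e) + X"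
    unfolding X_def by (simp add: sum.distrib distrib_left)
  finally have excess: "Q \<le> real (\<Sum>e\<in>E. ns e * h e) + X" .
  have cauchy_schwarz: "X^2 \<le> real (\<Sum>e\<in>E. (ns e)^2) * real (\<Sum>e\<in>E. (m e)^2)"
    unfolding X_def using Cauchy_Schwarz_ineq_sum[of "\<lambda>e. real (ns e)" "\<lambda>e. real (m e)" E] by simp
  have "(\<Sum>e\<in>E. ns e) \<le> (\<Sum>e\<in>E. (ns e)^2)"
    by (intro sum_mono) (simp add: power2_eq_square le_square)
  then have N_le: "N \<le> real (\<Sum>e\<in>E. (ns e)^2)"
    unfolding N_def by (metis of_nat_le_iff of_nat_sum)
  have squares: "real (\<Sum>e\<in>E. (m e)^2) \<le> 2 * b * (Q + N)"
    using assms(2) unfolding split .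
  have Q_nonneg: "0 \<le> Q" and N_nonneg: "0 \<le> N" unfolding Q_def N_def by (simp_all add: sum_nonneg)
  show ?thesis unfolding split
    by (rule quadratic_estimate[OF excess cauchy_schwarz squares Q_nonneg N_nonneg N_le assms(3)])
qed

theorem lemma3:
  fixes E :: "'e set" and n T \<beta> :: nat and \<Sigma> :: "nat \<Rightarrow> 'e set set"
    and Sq :: "nat \<Rightarrow> nat \<Rightarrow> 'e set" and \<pi> :: "nat \<Rightarrow> nat" and Sstar :: "nat \<Rightarrow> 'e set"
  assumes "congestion_game E n \<Sigma>"
    and "\<beta> \<ge> 1"
    and "covering n \<Sigma> T Sq \<pi>"
    and "bounded_covering \<beta> T \<pi>"
    and "optimal_profile n \<Sigma> Sstar"
    and "social_cost n Sstar > 0"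
  shows "real (rho n T Sq \<pi> Sstar) / real (social_cost n Sstar)
           \<le> 2 * (real (H n Sq Sstar) / real (social_cost n Sstar)) + 4 * real \<beta> + 1"
proof -
  have opt: "valid_profile n \<Sigma> Sstar" using assms(5) by (simp add: optimal_profile_def)
  have finE: "finite E" using assms(1) by (simp add: congestion_game_def)
  note resources = sum_players_resources[OF finE strategy_subset[OF assms(1) opt]]
  have peak_cost: "peak_cost n T Sq Sstar = (\<Sum>e\<in>E. load n Sstar e * (peak_load n T Sq e + 1))"
    unfolding peak_cost_def by (rule resources)
  have initial: "H n Sq Sstar = (\<Sum>e\<in>E. load n Sstar e * load n (Sq 0) e)"
    unfolding H_def by (rule resources)
  have OPT: "social_cost n Sstar = (\<Sum>e\<in>E. (load n Sstar e)^2)"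
    unfolding social_cost_def cost_def by (simp add: resources power2_eq_square)
  obtain m where peak: "\<And>e. peak_load n T Sq e \<le> load n (Sq 0) e + m e"
    and squares: "(\<Sum>e\<in>E. (m e)^2) \<le> 2 * \<beta> * peak_cost n T Sq Sstar"
    using movers_bound[OF assms(1,3,4) opt] by blast
  from squares have "real (\<Sum>e\<in>E. (m e)^2) \<le> real (2 * \<beta> * peak_cost n T Sq Sstar)"
    by (rule of_nat_mono)
  then have real_squares: "real (\<Sum>e\<in>E. (m e)^2)
      \<le> 2 * real \<beta> * real (\<Sum>e\<in>E. load n Sstar e * (peak_load n T Sq e + 1))"
    unfolding peak_cost by (simp only: of_nat_mult of_nat_numeral)
  have normalize: "r / c \<le> 2 * (h / c) + 4 * b + 1" if "r \<le> 2 * h + (4 * b + 1) * c" "0 < c"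
    for r h c b :: real
    using that by (simp add: field_simps)
  have "real (rho n T Sq \<pi> Sstar) \<le> real (peak_cost n T Sq Sstar)"
    using rho_le_peak_cost[OF assms(3)] by simp
  also have "\<dots> \<le> 2 * real (H n Sq Sstar) + (4 * real \<beta> + 1) * real (social_cost n Sstar)"
    unfolding peak_cost initial OPT
    by (rule resource_estimate[OF peak real_squares]) (use assms(2) in simp)
  finally show ?thesis using assms(6) by (intro normalize) simp_all
qed

end
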